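(* In the two-door cascading memoryless semi-fractional setting, for every $x\in[0,1]$, every real $t\ge0$ and every semi-fractional sequence $\pi$, letting $y=x/(q_2+p_2x)$, $$\mathbb{E}_x[1^t\cdot\pi]=t+\mathbb{E}_{q_1^tx}[\pi],\qquad \mathbb{E}_x[2\cdot\pi]=c+\frac{x}{y}\,\mathbb{E}_y[\pi].$$
   Context: Two cascading memoryless doors with durations: parameters $p_1,p_2\in(0,1)$, $q_1=1-p_1$, $q_2=1-p_2$, and $c>0$. A semi-fractional sequence is an infinite sequence of knocks of the form $1^t$ ($t\ge0$ real) and $2$ (consecutive 1-knocks $1^a1^b$ being identified with $1^{a+b}$). A 1-knock $1^t$ takes $t$ time units and, if door 1 is closed, opens it with probability $1-q_1^t$, independently of everything else. A 2-knock takes $c$ time units and opens door 2 with probability $p_2$ (independently) if door 1 is open at that time, and with probability $0$ otherwise. There is no feedback; the running time is the time at which both doors are open. For $x\in[0,1]$, $\mathbb{E}_x[\pi]$ denotes the expected running time of $\pi$ when started with door 2 closed and door 1 closed with probability $x$ (open with probability $1-x$); $\mathbb{E}[\pi]=\mathbb{E}_1[\pi]$. For a knock $a$ and a sequence $\pi$, $a\cdot\pi$ is the sequence starting with $a$ followed by $\pi$. *)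

theory Defs
  imports "HOL-Probability.Probability"
begin

text \<open>Knocks: \<open>K1 t\<close> is the 1-knock 1^t (duration t), \<open>K2\<close> is the 2-knock (duration c).
  A semi-fractional sequence is an infinite sequence of knocks, i.e. a function nat => knock,
  all of whose 1-knocks have nonnegative duration.  (Merging consecutive 1-knocks does not
  change the running time in the model below, so raw sequences are used.)\<close>

datatype knock = K1 real | K2

definition semi_fractional :: "(nat \<Rightarrow> knock) \<Rightarrow> bool" where
  "semi_fractional \<pi> \<longleftrightarrow> (\<forall>i. case \<pi> i of K1 s \<Rightarrow> 0 \<le> s | K2 \<Rightarrow> True)"

definition kcons :: "knock \<Rightarrow> (nat \<Rightarrow> knock) \<Rightarrow> (nat \<Rightarrow> knock)" where
  "kcons a \<pi> = case_nat a \<pi>"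

definition dur :: "real \<Rightarrow> knock \<Rightarrow> real" where
  "dur c a = (case a of K1 s \<Rightarrow> s | K2 \<Rightarrow> c)"

definition time1_before :: "(nat \<Rightarrow> knock) \<Rightarrow> nat \<Rightarrow> real" where
  "time1_before \<pi> k = (\<Sum>i<k. case \<pi> i of K1 s \<Rightarrow> s | K2 \<Rightarrow> 0)"

definition end_time :: "real \<Rightarrow> (nat \<Rightarrow> knock) \<Rightarrow> nat \<Rightarrow> real" where
  "end_time c \<pi> k = (\<Sum>i\<le>k. dur c (\<pi> i))"

text \<open>Outcome \<omega> = (d1, (U, coin)): d1 = door 1 initially closed; if so, door 1 opens once the
  accumulated 1-knock time reaches U, where U is exponential with P(U > s) = q1^s (memoryless;
  a 1-knock 1^t opens a closed door 1 with probability 1 - q1^t, independently);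
  coin k = the 2-knock at position k would open door 2 (probability p2, independent).\<close>
definition opens2 :: "(nat \<Rightarrow> knock) \<Rightarrow> bool \<times> real \<times> (nat \<Rightarrow> bool) \<Rightarrow> nat \<Rightarrow> bool" where
  "opens2 \<pi> \<omega> k = (case \<omega> of (d1, U, coin) \<Rightarrow>
      \<pi> k = K2 \<and> (\<not> d1 \<or> U \<le> time1_before \<pi> k) \<and> coin k)"

definition run_time :: "real \<Rightarrow> (nat \<Rightarrow> knock) \<Rightarrow> bool \<times> real \<times> (nat \<Rightarrow> bool) \<Rightarrow> ennreal" where
  "run_time c \<pi> \<omega> =
     (if \<exists>k. opens2 \<pi> \<omega> k then ennreal (end_time c \<pi> (LEAST k. opens2 \<pi> \<omega> k)) else \<infinity>)"

text \<open>Probability space: door 1 initially closed with probability x, U exponential with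
  rate -ln q1 (so P(U > s) = q1 powr s), independent Bernoulli(p2) coins.\<close>
definition door_space :: "real \<Rightarrow> real \<Rightarrow> real \<Rightarrow> (bool \<times> real \<times> (nat \<Rightarrow> bool)) measure" where
  "door_space p1 p2 x =
     measure_pmf (bernoulli_pmf x) \<Otimes>\<^sub>M
       (density lborel (exponential_density (- ln (1 - p1))) \<Otimes>\<^sub>M
        (\<Pi>\<^sub>M i\<in>(UNIV::nat set). measure_pmf (bernoulli_pmf p2)))"

definition exp_time :: "real \<Rightarrow> real \<Rightarrow> real \<Rightarrow> real \<Rightarrow> (nat \<Rightarrow> knock) \<Rightarrow> ennreal" where
  "exp_time p1 p2 c x \<pi> = (\<integral>\<^sup>+ \<omega>. run_time c \<pi> \<omega> \<partial>door_space p1 p2 x)"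

end

theory Submission
  imports Defs
begin

text \<open>Conditioning on the initial state of door 1 writes \<open>E\<^sub>x\<close> as the mixture
  \<open>x \<cdot> E_closed + (1 - x) \<cdot> E_open\<close>, where \<open>E_closed\<close> averages over the
  exponential time \<open>U\<close> at which door 1 opens.  A knock \<open>1\<^sup>t\<close> lowers \<open>U\<close> by \<open>t\<close>; by memorylessness
  the clock survives with probability \<open>q\<^sub>1\<^sup>t\<close>, and the remaining problem is then again a fresh closed
  start, otherwise door 1 is open.  A 2-knock costs \<open>c\<close> and, if door 1 is open, ends the run with
  probability \<open>p\<^sub>2\<close>; otherwise the run continues with the shifted coin sequence, which has the same
  distribution.  Collecting the coefficients of \<open>E_closed\<close> and \<open>E_open\<close> gives the two
  recursions.\<close>

lemma semi_fractional_kcons: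
  "semi_fractional \<pi> \<Longrightarrow> (case a of K1 s \<Rightarrow> 0 \<le> s | K2 \<Rightarrow> True) \<Longrightarrow> semi_fractional (kcons a \<pi>)"
  unfolding semi_fractional_def kcons_def by (auto split: nat.splits)

lemma time1_before_kcons_Suc:
  "time1_before (kcons a \<pi>) (Suc k) = (case a of K1 s \<Rightarrow> s | K2 \<Rightarrow> 0) + time1_before \<pi> k"
  unfolding time1_before_def kcons_def by (subst sum.lessThan_Suc_shift) simp

lemma end_time_kcons_Suc: "end_time c (kcons a \<pi>) (Suc k) = dur c a + end_time c \<pi> k"
  unfolding end_time_def kcons_def by (subst sum.atMost_Suc_shift) simp

lemma time1_before_nonneg: "semi_fractional \<pi> \<Longrightarrow> 0 \<le> time1_before \<pi> k"
  unfolding time1_before_def semi_fractional_def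
  by (intro sum_nonneg) (auto split: knock.splits dest: spec)

lemma dur_nonneg: "semi_fractional \<pi> \<Longrightarrow> 0 \<le> c \<Longrightarrow> 0 \<le> dur c (\<pi> i)"
  unfolding semi_fractional_def dur_def by (auto split: knock.splits dest: spec[of _ i])

lemma end_time_nonneg: "semi_fractional \<pi> \<Longrightarrow> 0 \<le> c \<Longrightarrow> 0 \<le> end_time c \<pi> k"
  unfolding end_time_def by (intro sum_nonneg dur_nonneg)

lemma end_time_mono:
  "semi_fractional \<pi> \<Longrightarrow> 0 \<le> c \<Longrightarrow> k \<le> k' \<Longrightarrow> end_time c \<pi> k \<le> end_time c \<pi> k'"
  unfolding end_time_def by (intro sum_mono2 dur_nonneg) auto

text \<open>A form free of \<open>LEAST\<close>, from which measurability follows.\<close>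
lemma run_time_eq_INF:
  assumes "semi_fractional \<pi>" "0 \<le> c"
  shows "run_time c \<pi> \<omega> = (INF k. if opens2 \<pi> \<omega> k then ennreal (end_time c \<pi> k) else \<top>)"
proof (cases "\<exists>k. opens2 \<pi> \<omega> k")
  case True
  let ?L = "LEAST k. opens2 \<pi> \<omega> k"
  have "opens2 \<pi> \<omega> ?L"
    using True by (metis LeastI)
  then have "(INF k. if opens2 \<pi> \<omega> k then ennreal (end_time c \<pi> k) else \<top>) \<le> ennreal (end_time c \<pi> ?L)"
    by (intro INF_lower2[of ?L]) auto
  moreover have "ennreal (end_time c \<pi> ?L) \<le> (INF k. if opens2 \<pi> \<omega> k then ennreal (end_time c \<pi> k) else \<top>)"
    by (rule INF_greatest) (auto intro!: ennreal_leI end_time_mono[OF assms] Least_le)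
  ultimately show ?thesis
    using True by (simp add: run_time_def)
qed (simp add: run_time_def)

lemma run_time_shift:
  assumes "\<not> opens2 \<pi>' \<omega> 0" "\<And>k. opens2 \<pi>' \<omega> (Suc k) = opens2 \<pi> \<omega>' k"
    and "\<And>k. end_time c \<pi>' (Suc k) = a + end_time c \<pi> k" "0 \<le> a" "\<And>k. 0 \<le> end_time c \<pi> k"
  shows "run_time c \<pi>' \<omega> = ennreal a + run_time c \<pi> \<omega>'"
proof (cases "\<exists>k. opens2 \<pi> \<omega>' k")
  case True
  then obtain k where "opens2 \<pi>' \<omega> (Suc k)"
    using assms(2) by blast
  then have "(LEAST n. opens2 \<pi>' \<omega> n) = Suc (LEAST m. opens2 \<pi>' \<omega> (Suc m))"
    by (rule Least_Suc) (use assms(1) in auto)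
  then show ?thesis
    using True assms unfolding run_time_def by (auto simp: ennreal_plus)
next
  case False
  then have "\<not> (\<exists>k. opens2 \<pi>' \<omega> k)"
    using assms(1,2) by (metis not0_implies_Suc)
  with False show ?thesis
    by (simp add: run_time_def)
qed

lemma run_time_kcons_K1:
  assumes "semi_fractional \<pi>" "0 \<le> c" "0 \<le> t"
  shows "run_time c (kcons (K1 t) \<pi>) (d, u, coin) = ennreal t + run_time c \<pi> (d, u - t, coin \<circ> Suc)"
  by (rule run_time_shift)
     (auto simp: opens2_def time1_before_kcons_Suc end_time_kcons_Suc dur_def end_time_nonneg assms,
      auto simp: kcons_def)

lemma run_time_kcons_K2:
  assumes "semi_fractional \<pi>" "0 \<le> c"
  shows "run_time c (kcons K2 \<pi>) (d, u, coin) =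
     ennreal c + (if (\<not> d \<or> u \<le> 0) \<and> coin 0 then 0 else run_time c \<pi> (d, u, coin \<circ> Suc))"
proof (cases "(\<not> d \<or> u \<le> 0) \<and> coin 0")
  case True
  then have "opens2 (kcons K2 \<pi>) (d, u, coin) 0"
    by (auto simp: opens2_def kcons_def time1_before_def)
  with True show ?thesis
    by (auto simp: run_time_def end_time_def kcons_def dur_def)
next
  case False
  have "run_time c (kcons K2 \<pi>) (d, u, coin) = ennreal c + run_time c \<pi> (d, u, coin \<circ> Suc)"
    by (rule run_time_shift)
       (use False in \<open>auto simp: opens2_def time1_before_kcons_Suc end_time_kcons_Suc dur_def
         end_time_nonneg assms, auto simp: kcons_def time1_before_def\<close>)
  then show ?thesis
    unfolding if_not_P[OF False] .
qed

lemma run_time_door1_open: "run_time c \<pi> (False, u, coin) = run_time c \<pi> (False, u', coin)"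
proof -
  have "opens2 \<pi> (False, u, coin) = opens2 \<pi> (False, u', coin)"
    by (simp add: fun_eq_iff opens2_def)
  then show ?thesis
    by (simp add: run_time_def)
qed

lemma run_time_clock_nonpos:
  assumes "semi_fractional \<pi>" "u \<le> 0"
  shows "run_time c \<pi> (True, u, coin) = run_time c \<pi> (False, u', coin)"
proof -
  have "opens2 \<pi> (True, u, coin) = opens2 \<pi> (False, u', coin)"
    using time1_before_nonneg[OF assms(1)] assms(2) by (auto simp: opens2_def fun_eq_iff intro: order_trans)
  then show ?thesis
    by (simp add: run_time_def)
qed

abbreviation clock :: "real \<Rightarrow> real measure" where
  "clock p1 \<equiv> density lborel (exponential_density (- ln (1 - p1)))"

abbreviation coins :: "real \<Rightarrow> (nat \<Rightarrow> bool) measure" where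
  "coins p2 \<equiv> \<Pi>\<^sub>M i\<in>(UNIV::nat set). measure_pmf (bernoulli_pmf p2)"

lemma measurable_opens2[measurable]: "Measurable.pred (door_space p1 p2 x) (\<lambda>\<omega>. opens2 \<pi> \<omega> k)"
proof -
  have opens2_eq: "(\<lambda>\<omega>. opens2 \<pi> \<omega> k) =
      (\<lambda>\<omega>. \<pi> k = K2 \<and> (\<not> fst \<omega> \<or> fst (snd \<omega>) \<le> time1_before \<pi> k) \<and> snd (snd \<omega>) k)"
    by (auto simp: fun_eq_iff opens2_def split: prod.splits)
  show ?thesis
    unfolding opens2_eq door_space_def by measurable
qed

lemma measurable_run_time:
  assumes "semi_fractional \<pi>" "0 \<le> c"
  shows "run_time c \<pi> \<in> borel_measurable (door_space p1 p2 x)"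
  unfolding run_time_eq_INF[OF assms, abs_def] by measurable

lemma measurable_run_time_door1:
  assumes "semi_fractional \<pi>" "0 \<le> c"
  shows "(\<lambda>w. run_time c \<pi> (d, w)) \<in> borel_measurable (clock p1 \<Otimes>\<^sub>M coins p2)"
  using measurable_compose[OF measurable_Pair1' measurable_run_time[OF assms, of p1 p2 0, unfolded door_space_def]]
  by simp

lemma measurable_run_time_coins:
  assumes "semi_fractional \<pi>" "0 \<le> c"
  shows "(\<lambda>coin. run_time c \<pi> (d, u, coin)) \<in> borel_measurable (coins p2)"
  using measurable_compose[OF measurable_Pair1' measurable_run_time_door1[OF assms, of d p1 p2], of u]
  by simp

lemma nn_integral_pair_bernoulli:
  fixes f :: "bool \<times> 'b \<Rightarrow> ennreal"
  assumes "0 \<le> x" "x \<le> 1" "sigma_finite_measure N"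
    and "f \<in> borel_measurable (measure_pmf (bernoulli_pmf x) \<Otimes>\<^sub>M N)"
  shows "integral\<^sup>N (measure_pmf (bernoulli_pmf x) \<Otimes>\<^sub>M N) f =
     ennreal x * (\<integral>\<^sup>+ w. f (True, w) \<partial>N) + ennreal (1 - x) * (\<integral>\<^sup>+ w. f (False, w) \<partial>N)"
proof -
  have "integral\<^sup>N (measure_pmf (bernoulli_pmf x) \<Otimes>\<^sub>M N) f =
     (\<integral>\<^sup>+ d. \<integral>\<^sup>+ w. f (d, w) \<partial>N \<partial>measure_pmf (bernoulli_pmf x))"
    by (rule sigma_finite_measure.nn_integral_fst[symmetric, OF assms(3,4)])
  also have "\<dots> = (\<Sum>d\<in>UNIV. (\<integral>\<^sup>+ w. f (d, w) \<partial>N) * ennreal (pmf (bernoulli_pmf x) d))"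
    by (rule nn_integral_measure_pmf_support) auto
  finally show ?thesis
    using assms by (simp add: UNIV_bool mult.commute)
qed

lemma sequence_space_measure_pmf: "sequence_space (measure_pmf p)"
  by (simp add: sequence_space_def product_prob_space_def product_prob_space_axioms_def
      product_sigma_finite_def prob_space_measure_pmf prob_space_imp_sigma_finite)

lemma (in sequence_space) measurable_comp_Suc[measurable]: "(\<lambda>\<omega>. \<omega> \<circ> Suc) \<in> measurable S S"
  unfolding comp_def
  by (rule measurable_PiM_single'[where f="\<lambda>i \<omega>. \<omega> (Suc i)"])
     (auto intro: measurable_component_singleton simp: space_PiM)

lemma (in sequence_space) nn_integral_case_nat:
  assumes [measurable]: "f \<in> borel_measurable S"
  shows "(\<integral>\<^sup>+ \<omega>. f \<omega> \<partial>S) = (\<integral>\<^sup>+ s. \<integral>\<^sup>+ \<omega>. f (case_nat s \<omega>) \<partial>S \<partial>M)"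
proof -
  interpret P: pair_sigma_finite M S ..
  have "(\<integral>\<^sup>+ \<omega>. f \<omega> \<partial>S) = (\<integral>\<^sup>+ \<omega>. f ((\<lambda>(s, \<omega>). case_nat s \<omega>) \<omega>) \<partial>(M \<Otimes>\<^sub>M S))"
    by (subst PiM_iter[symmetric]) (simp add: nn_integral_distr)
  also have "\<dots> = (\<integral>\<^sup>+ s. \<integral>\<^sup>+ \<omega>. f (case_nat s \<omega>) \<partial>S \<partial>M)"
    by (subst nn_integral_fst[symmetric]) (simp_all add: split_beta')
  finally show ?thesis .
qed

lemma (in sequence_space) nn_integral_add_comp_Suc:
  assumes [measurable]: "f \<in> borel_measurable S"
  shows "(\<integral>\<^sup>+ \<omega>. a + f (\<omega> \<circ> Suc) \<partial>S) = a + (\<integral>\<^sup>+ \<omega>. f \<omega> \<partial>S)"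
proof -
  have "(\<lambda>\<omega>. a + f (\<omega> \<circ> Suc)) \<in> borel_measurable S"
    by measurable
  then have "(\<integral>\<^sup>+ \<omega>. a + f (\<omega> \<circ> Suc) \<partial>S) = (\<integral>\<^sup>+ s. \<integral>\<^sup>+ \<omega>. a + f \<omega> \<partial>S \<partial>M)"
    by (subst nn_integral_case_nat) (simp_all add: comp_def)
  also have "\<dots> = a + (\<integral>\<^sup>+ \<omega>. f \<omega> \<partial>S)"
    by (simp add: nn_integral_add M.emeasure_space_1 P.emeasure_space_1)
  finally show ?thesis .
qed

lemma nn_integral_exponential_memoryless:
  fixes g :: "real \<Rightarrow> ennreal"
  assumes l: "0 < l" and t: "0 \<le> t" and [measurable]: "g \<in> borel_measurable borel"
  shows "(\<integral>\<^sup>+ u. indicator {t..} u * g (u - t) \<partial>density lborel (exponential_density l)) =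
    ennreal (exp (- t * l)) * (\<integral>\<^sup>+ u. g u \<partial>density lborel (exponential_density l))"
proof -
  have density_shift: "ennreal (exponential_density l (t + u)) * (indicator {t..} (t + u) * g (t + u - t)) =
      ennreal (exp (- t * l)) * (ennreal (exponential_density l u) * g u)" for u
  proof (cases "u < 0")
    case False
    then have "exponential_density l (t + u) = exp (- t * l) * exponential_density l u"
      using t by (simp add: exponential_density_def algebra_simps flip: exp_add)
    then show ?thesis
      using False l t by (simp add: ennreal_mult'' mult.assoc exponential_density_nonneg)
  qed (simp add: exponential_density_def)
  have "(\<integral>\<^sup>+ u. indicator {t..} u * g (u - t) \<partial>density lborel (exponential_density l)) =
      (\<integral>\<^sup>+ u. ennreal (exponential_density l u) * (indicator {t..} u * g (u - t)) \<partial>lborel)"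
    by (rule nn_integral_density) auto
  also have "\<dots> = (\<integral>\<^sup>+ u. ennreal (exponential_density l (t + u)) * (indicator {t..} (t + u) * g (t + u - t)) \<partial>lborel)"
    by (subst nn_integral_real_affine[where c=1 and t=t]) auto
  also have "\<dots> = ennreal (exp (- t * l)) * (\<integral>\<^sup>+ u. ennreal (exponential_density l u) * g u \<partial>lborel)"
    unfolding density_shift by (rule nn_integral_cmult) auto
  also have "(\<integral>\<^sup>+ u. ennreal (exponential_density l u) * g u \<partial>lborel) =
      (\<integral>\<^sup>+ u. g u \<partial>density lborel (exponential_density l))"
    by (rule nn_integral_density[symmetric]) auto
  finally show ?thesis .
qed

lemma emeasure_exponential_lessThan:
  assumes l: "0 < l" and t: "0 \<le> t"
  shows "emeasure (density lborel (exponential_density l)) {..<t} = ennreal (1 - exp (- t * l))"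
proof -
  interpret E: prob_space "density lborel (exponential_density l)"
    using l by (rule prob_space_exponential_density)
  have "emeasure (density lborel (exponential_density l)) {t..} = ennreal (exp (- t * l))"
    using nn_integral_exponential_memoryless[OF l t, of "\<lambda>_. 1"] E.emeasure_space_1 by simp
  then have "E.prob {t..} = exp (- t * l)"
    by (simp add: E.emeasure_eq_measure)
  moreover have "{..<t} = space (density lborel (exponential_density l)) - {t..}"
    by auto
  ultimately show ?thesis
    using E.prob_compl[of "{t..}"] by (simp add: E.emeasure_eq_measure)
qed

lemma AE_exponential_pos: "AE u in density lborel (exponential_density l). 0 < u"
proof -
  have "AE u in lborel. (u::real) \<noteq> 0"
    by (rule AE_lborel_singleton)
  then have "AE u in lborel. 0 < ennreal (exponential_density l u) \<longrightarrow> 0 < u"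
    by eventually_elim (auto simp: exponential_density_def not_less)
  then show ?thesis
    by (subst AE_density) auto
qed

lemma ennreal_convex_combination_add:
  assumes "0 \<le> x" "x \<le> 1" "0 \<le> a"
  shows "ennreal x * (ennreal a + X) + ennreal (1 - x) * (ennreal a + Y) =
    ennreal a + (ennreal x * X + ennreal (1 - x) * Y)"
proof -
  have "ennreal x * ennreal a + ennreal (1 - x) * ennreal a = ennreal (x * a + (1 - x) * a)"
    using assms by (simp add: ennreal_mult ennreal_plus)
  also have "\<dots> = ennreal a"
    by (simp add: algebra_simps)
  finally have "ennreal x * ennreal a + ennreal (1 - x) * ennreal a = ennreal a" .
  moreover have "ennreal x * (ennreal a + X) + ennreal (1 - x) * (ennreal a + Y) =
      (ennreal x * ennreal a + ennreal (1 - x) * ennreal a) + (ennreal x * X + ennreal (1 - x) * Y)"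
    by (simp add: distrib_left add_ac)
  ultimately show ?thesis
    by simp
qed

text \<open>In \<open>exp_time_clock\<close>, door 1 starts closed and \<open>u\<close> is the amount of 1-knock time
  still needed to open it.\<close>
definition exp_time_clock :: "real \<Rightarrow> real \<Rightarrow> (nat \<Rightarrow> knock) \<Rightarrow> real \<Rightarrow> ennreal" where
  "exp_time_clock p2 c \<pi> u = (\<integral>\<^sup>+ coin. run_time c \<pi> (True, u, coin) \<partial>coins p2)"

definition exp_time_open :: "real \<Rightarrow> real \<Rightarrow> (nat \<Rightarrow> knock) \<Rightarrow> ennreal" where
  "exp_time_open p2 c \<pi> = (\<integral>\<^sup>+ coin. run_time c \<pi> (False, 0, coin) \<partial>coins p2)"

definition exp_time_closed :: "real \<Rightarrow> real \<Rightarrow> real \<Rightarrow> (nat \<Rightarrow> knock) \<Rightarrow> ennreal" where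
  "exp_time_closed p1 p2 c \<pi> = (\<integral>\<^sup>+ u. exp_time_clock p2 c \<pi> u \<partial>clock p1)"

context
  fixes p1 p2 c :: real
  assumes p1: "0 < p1" "p1 < 1" and p2: "0 \<le> p2" "p2 \<le> 1" and c: "0 \<le> c"
begin

interpretation clock: prob_space "clock p1"
  using p1 by (intro prob_space_exponential_density) simp

lemma emeasure_clock_UNIV: "emeasure (clock p1) UNIV = 1"
  using clock.emeasure_space_1 by simp

interpretation coins: sequence_space "measure_pmf (bernoulli_pmf p2)"
  by (rule sequence_space_measure_pmf)

lemma measurable_exp_time_clock: "semi_fractional \<pi> \<Longrightarrow> exp_time_clock p2 c \<pi> \<in> borel_measurable borel"
  using coins.borel_measurable_nn_integral_fst[OF measurable_run_time_door1[OF _ c, of \<pi> True p1 p2]]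
  by (simp add: exp_time_clock_def[abs_def] measurable_cong_sets[OF sets_density refl, symmetric])

lemma exp_time_eq_mixture:
  assumes sf: "semi_fractional \<pi>" and x: "0 \<le> x" "x \<le> 1"
  shows "exp_time p1 p2 c x \<pi> = ennreal x * exp_time_closed p1 p2 c \<pi> + ennreal (1 - x) * exp_time_open p2 c \<pi>"
proof -
  interpret P: pair_prob_space "clock p1" "coins p2" ..
  have "exp_time p1 p2 c x \<pi> = ennreal x * (\<integral>\<^sup>+ w. run_time c \<pi> (True, w) \<partial>(clock p1 \<Otimes>\<^sub>M coins p2))
     + ennreal (1 - x) * (\<integral>\<^sup>+ w. run_time c \<pi> (False, w) \<partial>(clock p1 \<Otimes>\<^sub>M coins p2))"
    using measurable_run_time[OF sf c] unfolding exp_time_def door_space_def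
    by (intro nn_integral_pair_bernoulli x P.sigma_finite_measure_axioms)
  also have "(\<integral>\<^sup>+ w. run_time c \<pi> (True, w) \<partial>(clock p1 \<Otimes>\<^sub>M coins p2)) = exp_time_closed p1 p2 c \<pi>"
    using coins.nn_integral_fst[OF measurable_run_time_door1[OF sf c]]
    by (simp add: exp_time_closed_def exp_time_clock_def)
  also have "(\<integral>\<^sup>+ w. run_time c \<pi> (False, w) \<partial>(clock p1 \<Otimes>\<^sub>M coins p2)) = exp_time_open p2 c \<pi>"
  proof -
    have "(\<integral>\<^sup>+ coin. run_time c \<pi> (False, u, coin) \<partial>coins p2) = exp_time_open p2 c \<pi>" for u
      unfolding exp_time_open_def by (intro nn_integral_cong run_time_door1_open)
    then show ?thesis
      using coins.nn_integral_fst[OF measurable_run_time_door1[OF sf c], symmetric]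
      by (simp add: emeasure_clock_UNIV)
  qed
  finally show ?thesis .
qed

lemma exp_time_clock_nonpos:
  "semi_fractional \<pi> \<Longrightarrow> u \<le> 0 \<Longrightarrow> exp_time_clock p2 c \<pi> u = exp_time_open p2 c \<pi>"
  unfolding exp_time_clock_def exp_time_open_def by (intro nn_integral_cong run_time_clock_nonpos)

lemma exp_time_clock_kcons_K1:
  assumes sf: "semi_fractional \<pi>" and t: "0 \<le> t"
  shows "exp_time_clock p2 c (kcons (K1 t) \<pi>) u = ennreal t + exp_time_clock p2 c \<pi> (u - t)"
  unfolding exp_time_clock_def run_time_kcons_K1[OF sf c t]
  by (rule coins.nn_integral_add_comp_Suc[OF measurable_run_time_coins[OF sf c]])

lemma exp_time_open_kcons_K1:
  assumes sf: "semi_fractional \<pi>" and t: "0 \<le> t"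
  shows "exp_time_open p2 c (kcons (K1 t) \<pi>) = ennreal t + exp_time_open p2 c \<pi>"
  unfolding exp_time_open_def run_time_kcons_K1[OF sf c t] run_time_door1_open[of c \<pi> "0 - t" _ 0]
  by (rule coins.nn_integral_add_comp_Suc[OF measurable_run_time_coins[OF sf c]])

lemma exp_time_closed_kcons_K1:
  assumes sf: "semi_fractional \<pi>" and t: "0 \<le> t"
  shows "exp_time_closed p1 p2 c (kcons (K1 t) \<pi>) = ennreal t +
    (ennreal ((1 - p1) powr t) * exp_time_closed p1 p2 c \<pi> + ennreal (1 - (1 - p1) powr t) * exp_time_open p2 c \<pi>)"
proof -
  define l where "l = - ln (1 - p1)"
  have l: "0 < l" and q: "(1 - p1) powr t = exp (- t * l)"
    using p1 by (simp_all add: l_def powr_def)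
  note G[measurable] = measurable_exp_time_clock[OF sf]
  have "exp_time_closed p1 p2 c (kcons (K1 t) \<pi>) = (\<integral>\<^sup>+ u. ennreal t + exp_time_clock p2 c \<pi> (u - t) \<partial>clock p1)"
    unfolding exp_time_closed_def exp_time_clock_kcons_K1[OF sf t] ..
  also have "\<dots> = ennreal t + (\<integral>\<^sup>+ u. exp_time_clock p2 c \<pi> (u - t) \<partial>clock p1)"
    by (simp add: nn_integral_add emeasure_clock_UNIV)
  also have "(\<integral>\<^sup>+ u. exp_time_clock p2 c \<pi> (u - t) \<partial>clock p1) =
      (\<integral>\<^sup>+ u. indicator {t..} u * exp_time_clock p2 c \<pi> (u - t) + indicator {..<t} u * exp_time_open p2 c \<pi> \<partial>clock p1)"
    by (intro nn_integral_cong) (auto simp: exp_time_clock_nonpos[OF sf] indicator_def)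
  also have "\<dots> = ennreal ((1 - p1) powr t) * exp_time_closed p1 p2 c \<pi> + ennreal (1 - (1 - p1) powr t) * exp_time_open p2 c \<pi>"
    using nn_integral_exponential_memoryless[OF l t G] emeasure_exponential_lessThan[OF l t]
    by (simp add: nn_integral_add nn_integral_multc exp_time_closed_def l_def q)
  finally show ?thesis .
qed

lemma exp_time_closed_kcons_K2:
  assumes sf: "semi_fractional \<pi>"
  shows "exp_time_closed p1 p2 c (kcons K2 \<pi>) = ennreal c + exp_time_closed p1 p2 c \<pi>"
proof -
  note G[measurable] = measurable_exp_time_clock[OF sf]
  have "exp_time_clock p2 c (kcons K2 \<pi>) u = ennreal c + exp_time_clock p2 c \<pi> u" if "0 < u" for u
    using that unfolding exp_time_clock_def run_time_kcons_K2[OF sf c]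
    by (simp add: coins.nn_integral_add_comp_Suc[OF measurable_run_time_coins[OF sf c]])
  \<comment> \<open>the clock is almost surely positive, so door 1 is still closed at the leading 2-knock\<close>
  then have "AE u in clock p1. exp_time_clock p2 c (kcons K2 \<pi>) u = ennreal c + exp_time_clock p2 c \<pi> u"
    using AE_exponential_pos by (rule eventually_mono[rotated])
  then have "exp_time_closed p1 p2 c (kcons K2 \<pi>) = (\<integral>\<^sup>+ u. ennreal c + exp_time_clock p2 c \<pi> u \<partial>clock p1)"
    unfolding exp_time_closed_def by (rule nn_integral_cong_AE)
  then show ?thesis
    by (simp add: nn_integral_add emeasure_clock_UNIV exp_time_closed_def)
qed

lemma exp_time_open_kcons_K2:
  assumes sf: "semi_fractional \<pi>"
  shows "exp_time_open p2 c (kcons K2 \<pi>) = ennreal c + ennreal (1 - p2) * exp_time_open p2 c \<pi>"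
proof -
  note f[measurable] = measurable_run_time_coins[OF sf c, of False 0 p2]
  have "exp_time_open p2 c (kcons K2 \<pi>) =
      (\<integral>\<^sup>+ coin. ennreal c + (if coin 0 then 0 else run_time c \<pi> (False, 0, coin \<circ> Suc)) \<partial>coins p2)"
    unfolding exp_time_open_def run_time_kcons_K2[OF sf c] by simp
  also have "\<dots> = ennreal c + (\<integral>\<^sup>+ coin. (if coin 0 then 0 else run_time c \<pi> (False, 0, coin \<circ> Suc)) \<partial>coins p2)"
    by (simp add: nn_integral_add coins.emeasure_space_1)
  also have "(\<integral>\<^sup>+ coin. (if coin 0 then 0 else run_time c \<pi> (False, 0, coin \<circ> Suc)) \<partial>coins p2) =
      (\<integral>\<^sup>+ s. (if s then 0 else exp_time_open p2 c \<pi>) \<partial>measure_pmf (bernoulli_pmf p2))"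
    by (subst coins.nn_integral_case_nat) (auto simp: exp_time_open_def comp_def intro!: nn_integral_cong)
  also have "\<dots> = ennreal (1 - p2) * exp_time_open p2 c \<pi>"
    using p2 by (subst nn_integral_measure_pmf_support[of UNIV]) (auto simp: UNIV_bool mult.commute)
  finally show ?thesis .
qed

lemma exp_time_kcons_K1:
  assumes sf: "semi_fractional \<pi>" and x: "0 \<le> x" "x \<le> 1" and t: "0 \<le> t"
  shows "exp_time p1 p2 c x (kcons (K1 t) \<pi>) = ennreal t + exp_time p1 p2 c ((1 - p1) powr t * x) \<pi>"
proof -
  define q where "q = (1 - p1) powr t"
  define A where "A = exp_time_closed p1 p2 c \<pi>"
  define B where "B = exp_time_open p2 c \<pi>"
  have q: "0 \<le> q" "q \<le> 1"
    using p1 t by (auto simp: q_def intro: powr_le1)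
  have qx: "0 \<le> q * x" "q * x \<le> 1"
    using q x by (auto intro: mult_le_one)
  have "exp_time p1 p2 c x (kcons (K1 t) \<pi>) =
      ennreal x * (ennreal t + (ennreal q * A + ennreal (1 - q) * B)) + ennreal (1 - x) * (ennreal t + B)"
    using exp_time_eq_mixture[OF semi_fractional_kcons[OF sf] x] t
      exp_time_closed_kcons_K1[OF sf t] exp_time_open_kcons_K1[OF sf t]
    by (simp add: A_def B_def q_def)
  also have "\<dots> = ennreal t + (ennreal x * (ennreal q * A + ennreal (1 - q) * B) + ennreal (1 - x) * B)"
    using x t by (rule ennreal_convex_combination_add)
  also have "ennreal x * (ennreal q * A + ennreal (1 - q) * B) + ennreal (1 - x) * B =
      ennreal (q * x) * A + ennreal (1 - q * x) * B"
  proof -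
    have "ennreal x * ennreal (1 - q) + ennreal (1 - x) = ennreal (x * (1 - q) + (1 - x))"
      using x q by (simp add: ennreal_mult ennreal_plus)
    also have "\<dots> = ennreal (1 - q * x)"
      by (simp add: algebra_simps)
    finally have B_coeff: "ennreal x * ennreal (1 - q) + ennreal (1 - x) = ennreal (1 - q * x)" .
    have A_coeff: "ennreal x * ennreal q = ennreal (q * x)"
      using x q by (simp add: ennreal_mult mult.commute)
    have "ennreal x * (ennreal q * A + ennreal (1 - q) * B) + ennreal (1 - x) * B =
        (ennreal x * ennreal q) * A + (ennreal x * ennreal (1 - q) + ennreal (1 - x)) * B"
      by (simp add: algebra_simps)
    then show ?thesis
      unfolding A_coeff B_coeff .
  qed
  also have "ennreal (q * x) * A + ennreal (1 - q * x) * B = exp_time p1 p2 c ((1 - p1) powr t * x) \<pi>"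
    using exp_time_eq_mixture[OF sf qx] by (simp add: A_def B_def q_def)
  finally show ?thesis .
qed

lemma exp_time_kcons_K2:
  assumes sf: "semi_fractional \<pi>" and x: "0 \<le> x" "x \<le> 1" and "p2 < 1"
  defines "s \<equiv> (1 - p2) + p2 * x"
  shows "exp_time p1 p2 c x (kcons K2 \<pi>) = ennreal c + ennreal s * exp_time p1 p2 c (x / s) \<pi>"
proof -
  define A where "A = exp_time_closed p1 p2 c \<pi>"
  define B where "B = exp_time_open p2 c \<pi>"
  have s: "0 < s"
    using p2 x \<open>p2 < 1\<close> by (simp add: s_def add_pos_nonneg)
  have "x \<le> s"
    using mult_nonneg_nonneg[of "1 - p2" "1 - x"] p2 x by (simp add: s_def algebra_simps)
  then have y: "0 \<le> x / s" "x / s \<le> 1"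
    using s x by simp_all
  have "exp_time p1 p2 c x (kcons K2 \<pi>) =
      ennreal x * (ennreal c + A) + ennreal (1 - x) * (ennreal c + ennreal (1 - p2) * B)"
    using exp_time_eq_mixture[OF semi_fractional_kcons[OF sf] x]
      exp_time_closed_kcons_K2[OF sf] exp_time_open_kcons_K2[OF sf]
    by (simp add: A_def B_def)
  also have "\<dots> = ennreal c + (ennreal x * A + ennreal (1 - x) * (ennreal (1 - p2) * B))"
    using x c by (rule ennreal_convex_combination_add)
  also have "ennreal x * A + ennreal (1 - x) * (ennreal (1 - p2) * B) =
      ennreal s * (ennreal (x / s) * A + ennreal (1 - x / s) * B)"
  proof -
    have weights: "s * (x / s) = x" "s * (1 - x / s) = (1 - x) * (1 - p2)"
      using s by (simp_all add: s_def field_simps)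
    have "ennreal s * (ennreal (x / s) * A + ennreal (1 - x / s) * B) =
        ennreal (s * (x / s)) * A + ennreal (s * (1 - x / s)) * B"
      using ennreal_mult[of s "x / s"] ennreal_mult[of s "1 - x / s"] s y
      by (simp only: distrib_left mult.assoc less_imp_le diff_ge_0_iff_ge)
    also have "\<dots> = ennreal x * A + ennreal (1 - x) * (ennreal (1 - p2) * B)"
      unfolding weights using x p2 by (simp add: ennreal_mult mult.assoc)
    finally show ?thesis ..
  qed
  also have "ennreal (x / s) * A + ennreal (1 - x / s) * B = exp_time p1 p2 c (x / s) \<pi>"
    using exp_time_eq_mixture[OF sf y] by (simp add: A_def B_def)
  finally show ?thesis .
qed

end

theorem mainTheorem12:
  fixes p1 p2 c x t :: real and \<pi> :: "nat \<Rightarrow> knock"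
  assumes "0 < p1" "p1 < 1" "0 < p2" "p2 < 1" "0 < c"
    and "0 \<le> x" "x \<le> 1" "0 \<le> t" "semi_fractional \<pi>"
  shows "(exp_time p1 p2 c x (kcons (K1 t) \<pi>)
           = ennreal t + exp_time p1 p2 c ((1 - p1) powr t * x) \<pi>)
         \<and> (exp_time p1 p2 c x (kcons K2 \<pi>)
           = ennreal c + ennreal ((1 - p2) + p2 * x)
               * exp_time p1 p2 c (x / ((1 - p2) + p2 * x)) \<pi>)"
  using exp_time_kcons_K1[of p1 p2 c \<pi> x t] exp_time_kcons_K2[of p1 p2 c \<pi> x] assms by simp

end
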